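(* Let $G$ be a discrete group, $\mathcal{B}=(B_g)_{g\in G}$ a Fell bundle, $\rho$ a $\mathcal{B}$-action on a Hilbert $\mathcal{B}$-bundle $\mathcal{X}=(X_g)_{g\in G}$, and $x\in X_e$. Then for each $g\in G$ the map $T_g:B_g\to B_g$, $T_g(b)=\langle x,\rho(b)x\rangle_{\mathcal{B}}$, is well-defined and linear, and $T=(T_g)_{g\in G}$ is a positive definite $\mathcal{B}$-bundle map.
   Context: Fell bundles are in the sense of Exel; $\mathcal{B}$ also denotes the disjoint union of fibres and $e$ is the unit of $G$. A Hilbert $\mathcal{B}$-bundle is a family $\mathcal{X}=(X_r)_{r\in G}$ of Banach spaces with maps $(x,b)\mapsto xb$ and $(x,y)\mapsto\langle x,y\rangle_{\mathcal{B}}\in\mathcal{B}$ such that: $X_rB_s\subseteq X_{rs}$ bilinearly; $\langle X_r,X_s\rangle_{\mathcal{B}}\subseteq B_{r^{-1}s}$, linear in the second variable; $\langle x,yb\rangle_{\mathcal{B}}=\langle x,y\rangle_{\mathcal{B}}b$, $\langle x,y\rangle_{\mathcal{B}}^*=\langle y,x\rangle_{\mathcal{B}}$; $\langle x,x\rangle_{\mathcal{B}}\ge0$ in $B_e$, zero only for $x=0$; $\|x\|=\|\langle x,x\rangle_{\mathcal{B}}\|^{1/2}$. A $\mathcal{B}$-action on $\mathcal{X}$ is a map $\rho$ from $\mathcal{B}$ to the maps $\mathcal{X}\to\mathcal{X}$ with: $\rho(B_g)X_h\subseteq X_{gh}$, $(b,x)\mapsto\rho(b)x$ bilinear there; $\rho(bc)=\rho(b)\rho(c)$;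 $\langle\rho(b)x,y\rangle_{\mathcal{B}}=\langle x,\rho(b^* )y\rangle_{\mathcal{B}}$; $(\rho(b)x)c=\rho(b)(xc)$. A $\mathcal{B}$-bundle map is a family of bounded linear maps $T_g:B_g\to B_g$; it is positive definite if $\sum_{i,j=1}^nb_iT_{g_i^{-1}g_j}(a_i^*a_j)b_j^*\ge0$ in $B_e$ for all $n$, $g_i\in G$, $a_i,b_i\in B_{g_i}$. *)

theory Defs
  imports Complex_Main "HOL-Algebra.Group"
begin

definition banach_fibre ::
  "'a set \<Rightarrow> ('a \<Rightarrow> 'a \<Rightarrow> 'a) \<Rightarrow> (complex \<Rightarrow> 'a \<Rightarrow> 'a) \<Rightarrow> 'a \<Rightarrow> ('a \<Rightarrow> real) \<Rightarrow> bool"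
where
  "banach_fibre F ad sm z nr \<longleftrightarrow>
     z \<in> F \<and>
     (\<forall>a\<in>F. \<forall>b\<in>F. ad a b \<in> F) \<and>
     (\<forall>c. \<forall>a\<in>F. sm c a \<in> F) \<and>
     (\<forall>a\<in>F. \<forall>b\<in>F. \<forall>c\<in>F. ad (ad a b) c = ad a (ad b c)) \<and>
     (\<forall>a\<in>F. \<forall>b\<in>F. ad a b = ad b a) \<and>
     (\<forall>a\<in>F. ad a z = a) \<and>
     (\<forall>a\<in>F. ad a (sm (-1) a) = z) \<and>
     (\<forall>c. \<forall>a\<in>F. \<forall>b\<in>F. sm c (ad a b) = ad (sm c a) (sm c b)) \<and>
     (\<forall>c d. \<forall>a\<in>F. sm (c + d) a = ad (sm c a) (sm d a)) \<and>
     (\<forall>c d. \<forall>a\<in>F. sm c (sm d a) = sm (c * d) a) \<and>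
     (\<forall>a\<in>F. sm 1 a = a) \<and>
     (\<forall>a\<in>F. nr a = 0 \<longleftrightarrow> a = z) \<and>
     (\<forall>c. \<forall>a\<in>F. nr (sm c a) = cmod c * nr a) \<and>
     (\<forall>a\<in>F. \<forall>b\<in>F. nr (ad a b) \<le> nr a + nr b) \<and>
     (\<forall>s. (\<forall>n. s n \<in> F) \<longrightarrow>
          (\<forall>e>0. \<exists>N. \<forall>m\<ge>N. \<forall>n\<ge>N. nr (ad (s m) (sm (-1) (s n))) < e) \<longrightarrow>
          (\<exists>l\<in>F. (\<lambda>n. nr (ad (s n) (sm (-1) l))) \<longlonglongrightarrow> 0))"

text \<open>The type 'b is the total space (disjoint union of the fibres);
fb_deg b is the group element g with b in B_g. Addition, scalar
multiplication and norm are only meaningful inside a fibre.\<close>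

record ('g, 'b) fell_ops =
  fb_deg  :: "'b \<Rightarrow> 'g"
  fb_add  :: "'b \<Rightarrow> 'b \<Rightarrow> 'b"
  fb_smul :: "complex \<Rightarrow> 'b \<Rightarrow> 'b"
  fb_zero :: "'g \<Rightarrow> 'b"
  fb_norm :: "'b \<Rightarrow> real"
  fb_mul  :: "'b \<Rightarrow> 'b \<Rightarrow> 'b"
  fb_star :: "'b \<Rightarrow> 'b"

definition fibre :: "('g, 'b, 'z) fell_ops_scheme \<Rightarrow> 'g \<Rightarrow> 'b set" where
  "fibre B g = {b. fb_deg B b = g}"

definition fb_pos :: "('g, 'm) monoid_scheme \<Rightarrow> ('g, 'b, 'z) fell_ops_scheme \<Rightarrow> 'b \<Rightarrow> bool" where
  "fb_pos G B a \<longleftrightarrow> fb_deg B a = \<one>\<^bsub>G\<^esub> \<and>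
     (\<exists>c. fb_deg B c = \<one>\<^bsub>G\<^esub> \<and> a = fb_mul B (fb_star B c) c)"

definition fell_bundle :: "('g, 'm) monoid_scheme \<Rightarrow> ('g, 'b, 'z) fell_ops_scheme \<Rightarrow> bool" where
  "fell_bundle G B \<longleftrightarrow>
     group G \<and>
     (\<forall>b. fb_deg B b \<in> carrier G) \<and>
     (\<forall>g\<in>carrier G. fb_deg B (fb_zero B g) = g \<and>
        banach_fibre (fibre B g) (fb_add B) (fb_smul B) (fb_zero B g) (fb_norm B)) \<and>
     \<comment> \<open>B_r B_s \<subseteq> B_rs\<close>
     (\<forall>b c. fb_deg B (fb_mul B b c) = fb_deg B b \<otimes>\<^bsub>G\<^esub> fb_deg B c) \<and>
     \<comment> \<open>multiplication is bilinear from B_r x B_s to B_rs\<close>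
     (\<forall>a a' c. fb_deg B a = fb_deg B a' \<longrightarrow>
        fb_mul B (fb_add B a a') c = fb_add B (fb_mul B a c) (fb_mul B a' c) \<and>
        fb_mul B c (fb_add B a a') = fb_add B (fb_mul B c a) (fb_mul B c a')) \<and>
     (\<forall>k a c. fb_mul B (fb_smul B k a) c = fb_smul B k (fb_mul B a c) \<and>
        fb_mul B c (fb_smul B k a) = fb_smul B k (fb_mul B c a)) \<and>
     \<comment> \<open>associativity\<close>
     (\<forall>a b c. fb_mul B (fb_mul B a b) c = fb_mul B a (fb_mul B b c)) \<and>
     \<comment> \<open>submultiplicativity of the norm\<close>
     (\<forall>b c. fb_norm B (fb_mul B b c) \<le> fb_norm B b * fb_norm B c) \<and>
     \<comment> \<open>B_r* \<subseteq> B_{r^-1}\<close>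
     (\<forall>b. fb_deg B (fb_star B b) = inv\<^bsub>G\<^esub> (fb_deg B b)) \<and>
     \<comment> \<open>involution is conjugate linear\<close>
     (\<forall>a a'. fb_deg B a = fb_deg B a' \<longrightarrow>
        fb_star B (fb_add B a a') = fb_add B (fb_star B a) (fb_star B a')) \<and>
     (\<forall>k a. fb_star B (fb_smul B k a) = fb_smul B (cnj k) (fb_star B a)) \<and>
     (\<forall>b c. fb_star B (fb_mul B b c) = fb_mul B (fb_star B c) (fb_star B b)) \<and>
     (\<forall>b. fb_star B (fb_star B b) = b) \<and>
     (\<forall>b. fb_norm B (fb_mul B (fb_star B b) b) = (fb_norm B b)\<^sup>2) \<and>
     (\<forall>b. fb_pos G B (fb_mul B (fb_star B b) b))"

record ('g, 'b, 'x) hilb_ops =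
  hb_deg  :: "'x \<Rightarrow> 'g"
  hb_add  :: "'x \<Rightarrow> 'x \<Rightarrow> 'x"
  hb_smul :: "complex \<Rightarrow> 'x \<Rightarrow> 'x"
  hb_zero :: "'g \<Rightarrow> 'x"
  hb_norm :: "'x \<Rightarrow> real"
  hb_ract :: "'x \<Rightarrow> 'b \<Rightarrow> 'x"
  hb_ip   :: "'x \<Rightarrow> 'x \<Rightarrow> 'b"

definition hfibre :: "('g, 'b, 'x, 'z) hilb_ops_scheme \<Rightarrow> 'g \<Rightarrow> 'x set" where
  "hfibre X g = {x. hb_deg X x = g}"

definition hilbert_bundle ::
  "('g, 'm) monoid_scheme \<Rightarrow> ('g, 'b, 'z) fell_ops_scheme \<Rightarrow> ('g, 'b, 'x, 'w) hilb_ops_scheme \<Rightarrow> bool"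
where
  "hilbert_bundle G B X \<longleftrightarrow>
     (\<forall>x. hb_deg X x \<in> carrier G) \<and>
     (\<forall>g\<in>carrier G. hb_deg X (hb_zero X g) = g \<and>
        banach_fibre (hfibre X g) (hb_add X) (hb_smul X) (hb_zero X g) (hb_norm X)) \<and>
     \<comment> \<open>X_r B_s \<subseteq> X_rs, bilinearly\<close>
     (\<forall>x b. hb_deg X (hb_ract X x b) = hb_deg X x \<otimes>\<^bsub>G\<^esub> fb_deg B b) \<and>
     (\<forall>x x' b. hb_deg X x = hb_deg X x' \<longrightarrow>
        hb_ract X (hb_add X x x') b = hb_add X (hb_ract X x b) (hb_ract X x' b)) \<and>
     (\<forall>x b b'. fb_deg B b = fb_deg B b' \<longrightarrow>
        hb_ract X x (fb_add B b b') = hb_add X (hb_ract X x b) (hb_ract X x b')) \<and>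
     (\<forall>k x b. hb_ract X (hb_smul X k x) b = hb_smul X k (hb_ract X x b) \<and>
        hb_ract X x (fb_smul B k b) = hb_smul X k (hb_ract X x b)) \<and>
     \<comment> \<open><X_r, X_s> \<subseteq> B_{r^-1 s}\<close>
     (\<forall>x y. fb_deg B (hb_ip X x y) = inv\<^bsub>G\<^esub> (hb_deg X x) \<otimes>\<^bsub>G\<^esub> hb_deg X y) \<and>
     \<comment> \<open>linear in the second variable\<close>
     (\<forall>x y y'. hb_deg X y = hb_deg X y' \<longrightarrow>
        hb_ip X x (hb_add X y y') = fb_add B (hb_ip X x y) (hb_ip X x y')) \<and>
     (\<forall>k x y. hb_ip X x (hb_smul X k y) = fb_smul B k (hb_ip X x y)) \<and>
     (\<forall>x y b. hb_ip X x (hb_ract X y b) = fb_mul B (hb_ip X x y) b) \<and>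
     (\<forall>x y. fb_star B (hb_ip X x y) = hb_ip X y x) \<and>
     (\<forall>x. fb_pos G B (hb_ip X x x)) \<and>
     (\<forall>x. hb_ip X x x = fb_zero B \<one>\<^bsub>G\<^esub> \<longrightarrow> x = hb_zero X (hb_deg X x)) \<and>
     (\<forall>x. hb_norm X x = sqrt (fb_norm B (hb_ip X x x)))"

definition bundle_action ::
  "('g, 'm) monoid_scheme \<Rightarrow> ('g, 'b, 'z) fell_ops_scheme \<Rightarrow> ('g, 'b, 'x, 'w) hilb_ops_scheme
   \<Rightarrow> ('b \<Rightarrow> 'x \<Rightarrow> 'x) \<Rightarrow> bool"
where
  "bundle_action G B X \<rho> \<longleftrightarrow>
     (\<forall>b x. hb_deg X (\<rho> b x) = fb_deg B b \<otimes>\<^bsub>G\<^esub> hb_deg X x) \<and>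
     (\<forall>b b' x. fb_deg B b = fb_deg B b' \<longrightarrow>
        \<rho> (fb_add B b b') x = hb_add X (\<rho> b x) (\<rho> b' x)) \<and>
     (\<forall>b x x'. hb_deg X x = hb_deg X x' \<longrightarrow>
        \<rho> b (hb_add X x x') = hb_add X (\<rho> b x) (\<rho> b x')) \<and>
     (\<forall>k b x. \<rho> (fb_smul B k b) x = hb_smul X k (\<rho> b x) \<and>
        \<rho> b (hb_smul X k x) = hb_smul X k (\<rho> b x)) \<and>
     (\<forall>b c. \<rho> (fb_mul B b c) = \<rho> b \<circ> \<rho> c) \<and>
     (\<forall>b x y. hb_ip X (\<rho> b x) y = hb_ip X x (\<rho> (fb_star B b) y)) \<and>
     (\<forall>b x c. hb_ract X (\<rho> b x) c = \<rho> b (hb_ract X x c))"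

text \<open>A B-bundle map is a family (T_g) of bounded linear maps B_g \<rightarrow> B_g;
it is represented by one function T on the total space whose restriction
to B_g is T_g.\<close>

definition bundle_map ::
  "('g, 'm) monoid_scheme \<Rightarrow> ('g, 'b, 'z) fell_ops_scheme \<Rightarrow> ('b \<Rightarrow> 'b) \<Rightarrow> bool"
where
  "bundle_map G B T \<longleftrightarrow>
     (\<forall>g\<in>carrier G.
        (\<forall>b\<in>fibre B g. T b \<in> fibre B g) \<and>
        (\<forall>a\<in>fibre B g. \<forall>b\<in>fibre B g. T (fb_add B a b) = fb_add B (T a) (T b)) \<and>
        (\<forall>k. \<forall>a\<in>fibre B g. T (fb_smul B k a) = fb_smul B k (T a)) \<and>
        (\<exists>K. \<forall>b\<in>fibre B g. fb_norm B (T b) \<le> K * fb_norm B b))"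

fun fb_sum :: "('g, 'b, 'z) fell_ops_scheme \<Rightarrow> 'g \<Rightarrow> (nat \<Rightarrow> 'b) \<Rightarrow> nat \<Rightarrow> 'b" where
  "fb_sum B g f 0 = fb_zero B g"
| "fb_sum B g f (Suc n) = fb_add B (fb_sum B g f n) (f n)"

definition positive_definite ::
  "('g, 'm) monoid_scheme \<Rightarrow> ('g, 'b, 'z) fell_ops_scheme \<Rightarrow> ('b \<Rightarrow> 'b) \<Rightarrow> bool"
where
  "positive_definite G B T \<longleftrightarrow>
     (\<forall>n (gs :: nat \<Rightarrow> 'g) (a :: nat \<Rightarrow> 'b) (b :: nat \<Rightarrow> 'b).
        (\<forall>i<n. gs i \<in> carrier G \<and> a i \<in> fibre B (gs i) \<and> b i \<in> fibre B (gs i)) \<longrightarrow>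
        fb_pos G B
          (fb_sum B \<one>\<^bsub>G\<^esub> (\<lambda>i. fb_sum B \<one>\<^bsub>G\<^esub> (\<lambda>j.
              fb_mul B (fb_mul B (b i) (T (fb_mul B (fb_star B (a i)) (a j)))) (fb_star B (b j))) n) n))"

end

theory Submission
  imports Defs
begin

text \<open>Positive definiteness is the identity
  \<open>\<Sum>\<^sub>i\<^sub>j b\<^sub>i \<langle>x, \<rho>(a\<^sub>i\<^sup>* a\<^sub>j) x\<rangle> b\<^sub>j\<^sup>* = \<langle>\<Sum>\<^sub>i u\<^sub>i, \<Sum>\<^sub>j u\<^sub>j\<rangle>\<close> with \<open>u\<^sub>j = \<rho>(a\<^sub>j) x \<cdot> b\<^sub>j\<^sup>*\<close>.
  The work lies in the boundedness of \<open>T\<^sub>g\<close>, i.e. of \<open>b \<mapsto> \<rho>(b)\<close>, because the axioms give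
  no order on \<open>B\<^sub>e\<close> and hence no Cauchy-Schwarz inequality. Polarisation still bounds
  \<open>\<parallel>\<langle>u,v\<rangle>\<parallel>\<close> by \<open>(\<parallel>u\<parallel> + \<parallel>v\<parallel>)\<^sup>2/2\<close> whenever \<open>\<langle>u,v\<rangle> = \<langle>v,u\<rangle>\<close>. For self-adjoint
  \<open>h \<in> B\<^sub>e\<close> with \<open>\<parallel>h\<parallel> \<le> 1/2\<close> a contraction argument in \<open>B\<^sub>e\<close> produces \<open>l\<close> with
  \<open>h\<^sup>2 + (1 + l)\<^sup>2 = 1\<close>; then \<open>\<rho>(h) y\<close> and \<open>y + \<rho>(l) y\<close> split \<open>\<langle>y,y\<rangle>\<close> into two
  summands, which gives \<open>\<parallel>\<rho>(h) y\<parallel> \<le> \<parallel>y\<parallel>\<close> and from there \<open>\<parallel>\<rho>(b) y\<parallel> \<le> 3 \<parallel>y\<parallel>\<close> for \<open>\<parallel>b\<parallel> = 1\<close>.\<close>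

locale fibre_space =
  fixes F :: "'a set" and add :: "'a \<Rightarrow> 'a \<Rightarrow> 'a" and smul :: "complex \<Rightarrow> 'a \<Rightarrow> 'a"
    and zero :: 'a and nrm :: "'a \<Rightarrow> real"
  assumes banach: "banach_fibre F add smul zero nrm"
begin

lemma zero_closed [simp]: "zero \<in> F"
  using banach unfolding banach_fibre_def by meson

lemma add_closed [simp]: "a \<in> F \<Longrightarrow> b \<in> F \<Longrightarrow> add a b \<in> F"
  using banach unfolding banach_fibre_def by meson

lemma smul_closed [simp]: "a \<in> F \<Longrightarrow> smul c a \<in> F"
  using banach unfolding banach_fibre_def by meson

lemma add_assoc: "a \<in> F \<Longrightarrow> b \<in> F \<Longrightarrow> c \<in> F \<Longrightarrow> add (add a b) c = add a (add b c)"
  using banach unfolding banach_fibre_def by meson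

lemma add_commute: "a \<in> F \<Longrightarrow> b \<in> F \<Longrightarrow> add a b = add b a"
  using banach unfolding banach_fibre_def by meson

lemma add_zero_right [simp]: "a \<in> F \<Longrightarrow> add a zero = a"
  using banach unfolding banach_fibre_def by meson

lemma add_neg [simp]: "a \<in> F \<Longrightarrow> add a (smul (-1) a) = zero"
  using banach unfolding banach_fibre_def by meson

lemma smul_add_right: "a \<in> F \<Longrightarrow> b \<in> F \<Longrightarrow> smul c (add a b) = add (smul c a) (smul c b)"
  using banach unfolding banach_fibre_def by meson

lemma smul_add_left: "a \<in> F \<Longrightarrow> smul (c + d) a = add (smul c a) (smul d a)"
  using banach unfolding banach_fibre_def by meson

lemma smul_smul [simp]: "a \<in> F \<Longrightarrow> smul c (smul d a) = smul (c * d) a"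
  using banach unfolding banach_fibre_def by meson

lemma smul_one [simp]: "a \<in> F \<Longrightarrow> smul 1 a = a"
  using banach unfolding banach_fibre_def by meson

lemma nrm_eq_zero_iff: "a \<in> F \<Longrightarrow> nrm a = 0 \<longleftrightarrow> a = zero"
  using banach unfolding banach_fibre_def by metis

lemma nrm_smul [simp]: "a \<in> F \<Longrightarrow> nrm (smul c a) = cmod c * nrm a"
  using banach unfolding banach_fibre_def by meson

lemma nrm_triangle: "a \<in> F \<Longrightarrow> b \<in> F \<Longrightarrow> nrm (add a b) \<le> nrm a + nrm b"
  using banach unfolding banach_fibre_def by meson

lemma complete:
  assumes "\<And>n. s n \<in> F"
    and "\<forall>\<epsilon>>0. \<exists>N. \<forall>m\<ge>N. \<forall>n\<ge>N. nrm (add (s m) (smul (-1) (s n))) < \<epsilon>"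
  shows "\<exists>l\<in>F. (\<lambda>n. nrm (add (s n) (smul (-1) l))) \<longlonglongrightarrow> 0"
  using banach assms unfolding banach_fibre_def by blast

lemma add_left_commute: "a \<in> F \<Longrightarrow> b \<in> F \<Longrightarrow> c \<in> F \<Longrightarrow> add a (add b c) = add b (add a c)"
  by (metis add_assoc add_commute)

lemma add_zero_left [simp]: "a \<in> F \<Longrightarrow> add zero a = a"
  using add_commute by simp

lemma add_left_cancel:
  assumes "a \<in> F" "b \<in> F" "c \<in> F" "add a b = add a c"
  shows "b = c"
proof -
  have "b = add (add a (smul (-1) a)) b" using assms by simp
  also have "\<dots> = add (smul (-1) a) (add a b)" using assms by (metis add_assoc add_commute smul_closed)
  also have "\<dots> = add (smul (-1) a) (add a c)" using assms by simp
  also have "\<dots> = add (add a (smul (-1) a)) c" using assms by (metis add_assoc add_commute smul_closed)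
  finally show ?thesis using assms by simp
qed

lemma smul_zero_left [simp]:
  assumes "a \<in> F"
  shows "smul 0 a = zero"
proof -
  have "add (smul 0 a) (smul 0 a) = add (smul 0 a) zero"
    using smul_add_left[OF assms, of 0 0] assms by simp
  then show ?thesis using add_left_cancel assms by (meson smul_closed zero_closed)
qed

lemma smul_zero_right [simp]: "smul c zero = zero"
  by (metis mult_zero_right smul_smul smul_zero_left zero_closed)

lemma nrm_zero [simp]: "nrm zero = 0"
  using nrm_eq_zero_iff by simp

lemma nrm_nonneg:
  assumes "a \<in> F"
  shows "nrm a \<ge> 0"
proof -
  have "0 \<le> nrm a + nrm (smul (-1) a)"
    using nrm_triangle[of a "smul (-1) a"] assms by simp
  then show ?thesis using assms by simp
qed

definition diff :: "'a \<Rightarrow> 'a \<Rightarrow> 'a" where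
  "diff a b = add a (smul (-1) b)"

lemma diff_closed [simp]: "a \<in> F \<Longrightarrow> b \<in> F \<Longrightarrow> diff a b \<in> F"
  unfolding diff_def by simp

lemma diff_self [simp]: "a \<in> F \<Longrightarrow> diff a a = zero"
  unfolding diff_def by simp

lemma diff_zero_right [simp]: "a \<in> F \<Longrightarrow> diff a zero = a"
  unfolding diff_def by simp

lemma eq_if_diff_eq_zero:
  assumes "a \<in> F" "b \<in> F" "diff a b = zero"
  shows "a = b"
proof -
  have "add (smul (-1) b) a = add (smul (-1) b) b"
    using assms unfolding diff_def by (metis add_commute add_neg smul_closed)
  then show ?thesis using add_left_cancel assms by (meson smul_closed)
qed

lemma nrm_diff_commute:
  assumes "a \<in> F" "b \<in> F"
  shows "nrm (diff b a) = nrm (diff a b)"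
proof -
  have "diff b a = smul (-1) (diff a b)"
    using assms unfolding diff_def by (simp add: smul_add_right add_commute)
  then show ?thesis using assms by simp
qed

lemma add_diff_diff:
  assumes "a \<in> F" "b \<in> F" "c \<in> F"
  shows "add (diff a b) (diff b c) = diff a c"
proof -
  have "add (diff a b) (diff b c) = add a (add (add (smul (-1) b) b) (smul (-1) c))"
    using assms unfolding diff_def by (simp add: add_assoc)
  also have "\<dots> = diff a c" using assms unfolding diff_def by (simp add: add_commute)
  finally show ?thesis .
qed

lemma nrm_diff_triangle:
  "a \<in> F \<Longrightarrow> b \<in> F \<Longrightarrow> c \<in> F \<Longrightarrow> nrm (diff a c) \<le> nrm (diff a b) + nrm (diff b c)"
  by (metis add_diff_diff diff_closed nrm_triangle)

lemma smul_diff: "a \<in> F \<Longrightarrow> b \<in> F \<Longrightarrow> diff (smul c a) (smul c b) = smul c (diff a b)"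
  unfolding diff_def by (simp add: smul_add_right mult.commute)

lemma add_add_swap:
  "a \<in> F \<Longrightarrow> b \<in> F \<Longrightarrow> c \<in> F \<Longrightarrow> d \<in> F \<Longrightarrow> add (add a b) (add c d) = add (add a c) (add b d)"
  by (simp add: add_assoc add_left_commute[of b c d])

lemma diff_add_add_left:
  assumes "a \<in> F" "b \<in> F" "c \<in> F"
  shows "diff (add a b) (add a c) = diff b c"
proof -
  have "diff (add a b) (add a c) = add (add a b) (add (smul (-1) a) (smul (-1) c))"
    unfolding diff_def using assms by (simp add: smul_add_right)
  also have "\<dots> = add (add a (smul (-1) a)) (add b (smul (-1) c))"
    using assms by (intro add_add_swap) simp_all
  finally show ?thesis using assms unfolding diff_def by simp
qed

lemma add_self: "a \<in> F \<Longrightarrow> add a a = smul 2 a"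
  using smul_add_left[of a 1 1] by simp

lemma add_smul_cancel:
  assumes "a \<in> F" "b \<in> F" "c \<in> F" "\<alpha> + \<beta> = 0"
  shows "add (add a (smul \<alpha> c)) (add (smul \<beta> c) b) = add a b"
proof -
  have "add (add a (smul \<alpha> c)) (add (smul \<beta> c) b) = add a (add (add (smul \<alpha> c) (smul \<beta> c)) b)"
    using assms by (simp add: add_assoc)
  also have "add (smul \<alpha> c) (smul \<beta> c) = zero"
    using smul_add_left[of c \<alpha> \<beta>] assms by simp
  finally show ?thesis using assms by simp
qed

lemma add_diff_cancel_left:
  assumes "a \<in> F" "b \<in> F"
  shows "diff (add a b) a = b"
proof -
  have "add (add a b) (smul (-1) a) = add (add a (smul (-1) a)) b"
    using assms by (metis add_assoc add_commute smul_closed)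
  then show ?thesis using assms unfolding diff_def by simp
qed

lemma diff_polarization:
  assumes "a \<in> F" "c \<in> F" "d \<in> F"
  shows "diff (add (add a c) (add c d)) (add (add a (smul (-1) c)) (add (smul (-1) c) d)) = smul 4 c"
proof -
  have c: "add (smul (-1) c) (smul 2 c) = c"
    using smul_add_left[of c "-1" 2] assms by simp
  have "add (add (add a (smul (-1) c)) (add (smul (-1) c) d)) (add (smul 2 c) (smul 2 c))
      = add (add a (add (smul (-1) c) (smul 2 c))) (add (add (smul (-1) c) (smul 2 c)) d)"
    using assms by (simp only: add_assoc add_commute add_left_commute smul_closed add_closed)
  also have "\<dots> = add (add a c) (add c d)" by (simp only: c)
  finally have "add (add (add a (smul (-1) c)) (add (smul (-1) c) d)) (smul 4 c) = add (add a c) (add c d)"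
    using smul_add_left[of c 2 2] assms by simp
  then show ?thesis using add_diff_cancel_left assms by (metis add_closed smul_closed)
qed

lemma eq_if_nrm_diff_le_tendsto_zero:
  assumes "a \<in> F" "b \<in> F" "\<And>n. nrm (diff a b) \<le> g n" "g \<longlonglongrightarrow> 0"
  shows "a = b"
proof -
  have "nrm (diff a b) \<le> 0" using LIMSEQ_le_const[OF assms(4)] assms(3) by blast
  then have "nrm (diff a b) = 0" using nrm_nonneg[of "diff a b"] assms by simp
  then show ?thesis using nrm_eq_zero_iff eq_if_diff_eq_zero assms by simp
qed

lemma nrm_diff_geometric_le:
  assumes "\<And>n. s n \<in> F" "\<And>n. nrm (diff (s (Suc n)) (s n)) \<le> (1/2)^n" "n \<le> m"
  shows "nrm (diff (s m) (s n)) \<le> 2 * (1/2)^n - 2 * (1/2)^m"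
  using assms(3)
proof (induction m rule: dec_induct)
  case base
  then show ?case using assms by simp
next
  case (step m)
  have "nrm (diff (s (Suc m)) (s n)) \<le> nrm (diff (s (Suc m)) (s m)) + nrm (diff (s m) (s n))"
    using assms by (intro nrm_diff_triangle)
  also have "\<dots> \<le> (1/2)^m + (2 * (1/2)^n - 2 * (1/2)^m)"
    using assms(2)[of m] step.IH by linarith
  finally show ?case by simp
qed

lemma geometric_converges:
  assumes "\<And>n. s n \<in> F" "\<And>n. nrm (diff (s (Suc n)) (s n)) \<le> (1/2)^n"
  shows "\<exists>l\<in>F. (\<lambda>n. nrm (diff (s n) l)) \<longlonglongrightarrow> 0"
proof -
  have tail: "nrm (diff (s m) (s n)) \<le> 2 * (1/2)^N" if "N \<le> n" "n \<le> m" for N m n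
  proof -
    have "(1/2::real)^n \<le> (1/2)^N" using that by (intro power_decreasing) simp_all
    moreover have "(0::real) \<le> (1/2)^m" by simp
    ultimately show ?thesis using nrm_diff_geometric_le[OF assms that(2)] by linarith
  qed
  have "\<exists>N. \<forall>m\<ge>N. \<forall>n\<ge>N. nrm (diff (s m) (s n)) < \<epsilon>" if "\<epsilon> > 0" for \<epsilon> :: real
  proof -
    obtain N where N: "(1/2::real)^N < \<epsilon>/2"
      using real_arch_pow_inv[of "\<epsilon>/2" "1/2"] \<open>\<epsilon> > 0\<close> by auto
    have "nrm (diff (s m) (s n)) < \<epsilon>" if "N \<le> m" "N \<le> n" for m n
      using tail[of N n m] tail[of N m n] that N nrm_diff_commute[OF assms(1,1)]
      by (cases "n \<le> m") (simp_all add: nat_le_linear)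
    then show ?thesis by blast
  qed
  then show ?thesis using complete[of s] assms(1) unfolding diff_def by simp
qed

end

locale fell =
  fixes G :: "('g, 'm) monoid_scheme" and B :: "('g, 'b, 'z) fell_ops_scheme"
  assumes fell_bundle: "fell_bundle G B"
begin

sublocale G: group G
  using fell_bundle unfolding fell_bundle_def by meson

abbreviation e :: 'g where "e \<equiv> \<one>\<^bsub>G\<^esub>"
abbreviation Be :: "'b set" where "Be \<equiv> fibre B e"

lemma fb_deg_closed [simp]: "fb_deg B b \<in> carrier G"
  using fell_bundle unfolding fell_bundle_def by meson

lemma fb_deg_zero [simp]: "g \<in> carrier G \<Longrightarrow> fb_deg B (fb_zero B g) = g"
  using fell_bundle unfolding fell_bundle_def by meson

lemma fibre_space:
  "g \<in> carrier G \<Longrightarrow> fibre_space (fibre B g) (fb_add B) (fb_smul B) (fb_zero B g) (fb_norm B)"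
  using fell_bundle unfolding fell_bundle_def fibre_space_def by meson

lemma fb_deg_mul [simp]: "fb_deg B (fb_mul B b c) = fb_deg B b \<otimes>\<^bsub>G\<^esub> fb_deg B c"
  using fell_bundle unfolding fell_bundle_def by meson

lemma fb_mul_add_left:
  "fb_deg B a = fb_deg B a' \<Longrightarrow> fb_mul B (fb_add B a a') c = fb_add B (fb_mul B a c) (fb_mul B a' c)"
  using fell_bundle unfolding fell_bundle_def by meson

lemma fb_mul_add_right:
  "fb_deg B a = fb_deg B a' \<Longrightarrow> fb_mul B c (fb_add B a a') = fb_add B (fb_mul B c a) (fb_mul B c a')"
  using fell_bundle unfolding fell_bundle_def by meson

lemma fb_mul_smul_left [simp]: "fb_mul B (fb_smul B k a) c = fb_smul B k (fb_mul B a c)"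
  using fell_bundle unfolding fell_bundle_def by meson

lemma fb_mul_smul_right [simp]: "fb_mul B c (fb_smul B k a) = fb_smul B k (fb_mul B c a)"
  using fell_bundle unfolding fell_bundle_def by meson

lemma fb_mul_assoc: "fb_mul B (fb_mul B a b) c = fb_mul B a (fb_mul B b c)"
  using fell_bundle unfolding fell_bundle_def by meson

lemma fb_norm_mul_le: "fb_norm B (fb_mul B b c) \<le> fb_norm B b * fb_norm B c"
  using fell_bundle unfolding fell_bundle_def by meson

lemma fb_deg_star [simp]: "fb_deg B (fb_star B b) = inv\<^bsub>G\<^esub> (fb_deg B b)"
  using fell_bundle unfolding fell_bundle_def by meson

lemma fb_star_add:
  "fb_deg B a = fb_deg B a' \<Longrightarrow> fb_star B (fb_add B a a') = fb_add B (fb_star B a) (fb_star B a')"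
  using fell_bundle unfolding fell_bundle_def by meson

lemma fb_star_smul [simp]: "fb_star B (fb_smul B k a) = fb_smul B (cnj k) (fb_star B a)"
  using fell_bundle unfolding fell_bundle_def by meson

lemma fb_star_mul: "fb_star B (fb_mul B b c) = fb_mul B (fb_star B c) (fb_star B b)"
  using fell_bundle unfolding fell_bundle_def by meson

lemma fb_star_star [simp]: "fb_star B (fb_star B b) = b"
  using fell_bundle unfolding fell_bundle_def by meson

lemma fb_norm_star_mul_self: "fb_norm B (fb_mul B (fb_star B b) b) = (fb_norm B b)\<^sup>2"
  using fell_bundle unfolding fell_bundle_def by meson

lemma mem_fibre_iff: "b \<in> fibre B g \<longleftrightarrow> fb_deg B b = g"
  unfolding fibre_def by simp

lemma mem_fibre_deg: "b \<in> fibre B (fb_deg B b)"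
  by (simp add: mem_fibre_iff)

sublocale Be: fibre_space Be "fb_add B" "fb_smul B" "fb_zero B e" "fb_norm B"
  by (simp add: fibre_space)

lemma fb_deg_smul [simp]: "fb_deg B (fb_smul B k a) = fb_deg B a"
  using fibre_space.smul_closed[OF fibre_space mem_fibre_deg] by (simp add: mem_fibre_iff)

lemma fb_deg_add [simp]: "fb_deg B a = fb_deg B b \<Longrightarrow> fb_deg B (fb_add B a b) = fb_deg B a"
  using fibre_space.add_closed[OF fibre_space mem_fibre_deg, of a b] by (simp add: mem_fibre_iff)

lemma fb_norm_nonneg [simp]: "fb_norm B b \<ge> 0"
  using fibre_space.nrm_nonneg[OF fibre_space mem_fibre_deg] by simp

lemma fb_norm_smul [simp]: "fb_norm B (fb_smul B k b) = cmod k * fb_norm B b"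
  using fibre_space.nrm_smul[OF fibre_space mem_fibre_deg] by simp

lemma fb_smul_smul [simp]: "fb_smul B c (fb_smul B d b) = fb_smul B (c * d) b"
  using fibre_space.smul_smul[OF fibre_space mem_fibre_deg] by simp

lemma fb_smul_one [simp]: "fb_smul B 1 b = b"
  using fibre_space.smul_one[OF fibre_space mem_fibre_deg] by simp

lemma fb_norm_zero [simp]: "g \<in> carrier G \<Longrightarrow> fb_norm B (fb_zero B g) = 0"
  using fibre_space.nrm_zero[OF fibre_space] by simp

lemma fb_mul_closed_unit [simp]: "a \<in> Be \<Longrightarrow> b \<in> Be \<Longrightarrow> fb_mul B a b \<in> Be"
  by (simp add: mem_fibre_iff)

lemma fb_star_closed_unit [simp]: "a \<in> Be \<Longrightarrow> fb_star B a \<in> Be"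
  by (simp add: mem_fibre_iff)

lemma fb_mul_diff_left:
  "a \<in> Be \<Longrightarrow> a' \<in> Be \<Longrightarrow> fb_mul B (Be.diff a a') c = Be.diff (fb_mul B a c) (fb_mul B a' c)"
  unfolding Be.diff_def by (simp add: fb_mul_add_left mem_fibre_iff)

lemma fb_mul_diff_right:
  "a \<in> Be \<Longrightarrow> a' \<in> Be \<Longrightarrow> fb_mul B c (Be.diff a a') = Be.diff (fb_mul B c a) (fb_mul B c a')"
  unfolding Be.diff_def by (simp add: fb_mul_add_right mem_fibre_iff)

lemma fb_star_diff:
  "a \<in> Be \<Longrightarrow> a' \<in> Be \<Longrightarrow> fb_star B (Be.diff a a') = Be.diff (fb_star B a) (fb_star B a')"
  unfolding Be.diff_def by (simp add: fb_star_add mem_fibre_iff)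

lemma fb_norm_star [simp]: "fb_norm B (fb_star B b) = fb_norm B b"
proof -
  have le: "fb_norm B c \<le> fb_norm B (fb_star B c)" for c
  proof (cases "fb_norm B c = 0")
    case False
    then have "fb_norm B c > 0" using fb_norm_nonneg[of c] by linarith
    moreover have "(fb_norm B c)\<^sup>2 \<le> fb_norm B (fb_star B c) * fb_norm B c"
      using fb_norm_star_mul_self[of c] fb_norm_mul_le by metis
    ultimately show ?thesis by (simp add: power2_eq_square)
  qed simp
  show ?thesis using le[of b] le[of "fb_star B b"] by simp
qed

text \<open>A fixed point \<open>l\<close> of \<open>circle_step (h h)\<close> satisfies \<open>h\<^sup>2 + (1 + l)\<^sup>2 = 1\<close> in the
  unitisation of \<open>B\<^sub>e\<close>; it is obtained by iterating from \<open>0\<close>, where the map is a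
  contraction on the ball of radius \<open>1/4\<close> as long as \<open>\<parallel>h\<parallel> \<le> 1/2\<close>.\<close>

definition circle_step :: "'b \<Rightarrow> 'b \<Rightarrow> 'b" where
  "circle_step a s = fb_smul B (-1/2) (fb_add B a (fb_mul B s s))"

definition circle_iter :: "'b \<Rightarrow> nat \<Rightarrow> 'b" where
  "circle_iter a n = (circle_step a ^^ n) (fb_zero B e)"

lemma circle_iter_0 [simp]: "circle_iter a 0 = fb_zero B e"
  unfolding circle_iter_def by simp

lemma circle_iter_Suc: "circle_iter a (Suc n) = circle_step a (circle_iter a n)"
  unfolding circle_iter_def by simp

lemma circle_step_closed [simp]: "a \<in> Be \<Longrightarrow> s \<in> Be \<Longrightarrow> circle_step a s \<in> Be"
  unfolding circle_step_def by simp

lemma circle_iter_closed [simp]: "a \<in> Be \<Longrightarrow> circle_iter a n \<in> Be"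
  by (induction n) (simp_all add: circle_iter_Suc)

lemma circle_step_lipschitz:
  assumes "a \<in> Be" "s \<in> Be" "t \<in> Be"
  shows "fb_norm B (Be.diff (circle_step a s) (circle_step a t))
    \<le> (fb_norm B s + fb_norm B t) / 2 * fb_norm B (Be.diff s t)"
proof -
  have squares: "Be.diff (fb_mul B s s) (fb_mul B t t)
      = fb_add B (fb_mul B s (Be.diff s t)) (fb_mul B (Be.diff s t) t)"
    using assms by (simp add: fb_mul_diff_left fb_mul_diff_right Be.add_diff_diff)
  have "fb_norm B (Be.diff (fb_mul B s s) (fb_mul B t t))
      \<le> fb_norm B (fb_mul B s (Be.diff s t)) + fb_norm B (fb_mul B (Be.diff s t) t)"
    unfolding squares using assms by (intro Be.nrm_triangle) simp_all
  also have "\<dots> \<le> (fb_norm B s + fb_norm B t) * fb_norm B (Be.diff s t)"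
    using add_mono[OF fb_norm_mul_le[of s "Be.diff s t"] fb_norm_mul_le[of "Be.diff s t" t]]
    by (simp add: algebra_simps)
  finally have "fb_norm B (Be.diff (fb_mul B s s) (fb_mul B t t))
      \<le> (fb_norm B s + fb_norm B t) * fb_norm B (Be.diff s t)" .
  moreover have "Be.diff (circle_step a s) (circle_step a t)
      = fb_smul B (-1/2) (Be.diff (fb_mul B s s) (fb_mul B t t))"
    unfolding circle_step_def using assms by (simp add: Be.smul_diff Be.diff_add_add_left)
  ultimately show ?thesis using assms by simp
qed

lemma circle_step_norm_le:
  assumes "a \<in> Be" "s \<in> Be" "fb_norm B a \<le> 1/4" "fb_norm B s \<le> 1/4"
  shows "fb_norm B (circle_step a s) \<le> 1/4"
proof -
  have "fb_norm B (fb_mul B s s) \<le> 1/4 * (1/4)"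
    using fb_norm_mul_le[of s s] mult_mono[OF assms(4,4)] by simp
  moreover have "fb_norm B (fb_add B a (fb_mul B s s)) \<le> fb_norm B a + fb_norm B (fb_mul B s s)"
    using assms by (intro Be.nrm_triangle) simp_all
  ultimately show ?thesis unfolding circle_step_def using assms by simp
qed

lemma circle_iter_norm_le:
  assumes "a \<in> Be" "fb_norm B a \<le> 1/4"
  shows "fb_norm B (circle_iter a n) \<le> 1/4"
proof (induction n)
  case (Suc n)
  then show ?case unfolding circle_iter_Suc using assms by (intro circle_step_norm_le) simp_all
qed simp

lemma circle_iter_step_le:
  assumes "a \<in> Be" "fb_norm B a \<le> 1/4"
  shows "fb_norm B (Be.diff (circle_iter a (Suc n)) (circle_iter a n)) \<le> (1/2)^n"
proof (induction n)
  case 0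
  show ?case using circle_iter_norm_le[OF assms, of 1] assms by simp
next
  case (Suc n)
  have "fb_norm B (Be.diff (circle_iter a (Suc (Suc n))) (circle_iter a (Suc n)))
     \<le> (fb_norm B (circle_iter a (Suc n)) + fb_norm B (circle_iter a n)) / 2
       * fb_norm B (Be.diff (circle_iter a (Suc n)) (circle_iter a n))"
    unfolding circle_iter_Suc[of a "Suc n"] circle_iter_Suc[of a n]
    using assms by (intro circle_step_lipschitz) (simp_all add: circle_iter_Suc)
  also have "\<dots> \<le> 1/2 * (1/2)^n"
    using circle_iter_norm_le[OF assms, of n] circle_iter_norm_le[OF assms, of "Suc n"] Suc
    by (intro mult_mono) simp_all
  finally show ?case by simp
qed

lemma circle_step_selfadjoint:
  "a \<in> Be \<Longrightarrow> s \<in> Be \<Longrightarrow> fb_star B a = a \<Longrightarrow> fb_star B s = s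
    \<Longrightarrow> fb_star B (circle_step a s) = circle_step a s"
  unfolding circle_step_def by (simp add: fb_star_add mem_fibre_iff fb_star_mul)

lemma circle_iter_selfadjoint:
  assumes "a \<in> Be" "fb_star B a = a"
  shows "fb_star B (circle_iter a n) = circle_iter a n"
proof (induction n)
  case 0
  show ?case using fb_star_smul[of 0 "fb_zero B e"] by simp
next
  case (Suc n)
  then show ?case unfolding circle_iter_Suc using assms by (simp add: circle_step_selfadjoint)
qed

lemma circle_step_commute:
  assumes "h \<in> Be" "s \<in> Be" "fb_mul B h s = fb_mul B s h"
  shows "fb_mul B h (circle_step (fb_mul B h h) s) = fb_mul B (circle_step (fb_mul B h h) s) h"
proof -
  have "fb_mul B h (fb_mul B s s) = fb_mul B (fb_mul B s s) h"
    by (metis assms(3) fb_mul_assoc)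
  then show ?thesis
    unfolding circle_step_def using assms
    by (simp add: fb_mul_add_left fb_mul_add_right mem_fibre_iff fb_mul_assoc)
qed

lemma circle_iter_commute:
  assumes "h \<in> Be"
  shows "fb_mul B h (circle_iter (fb_mul B h h) n) = fb_mul B (circle_iter (fb_mul B h h) n) h"
proof (induction n)
  case 0
  show ?case using fb_mul_smul_right[of h 0 "fb_zero B e"] fb_mul_smul_left[of 0 "fb_zero B e" h] assms
    by simp
next
  case (Suc n)
  then show ?case unfolding circle_iter_Suc using assms by (intro circle_step_commute) simp_all
qed

lemma limit_selfadjoint:
  assumes "\<And>n. s n \<in> Be" "\<And>n. fb_star B (s n) = s n" "l \<in> Be"
    and lim: "(\<lambda>n. fb_norm B (Be.diff (s n) l)) \<longlonglongrightarrow> 0"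
  shows "fb_star B l = l"
proof (rule Be.eq_if_nrm_diff_le_tendsto_zero)
  fix n
  have "fb_norm B (Be.diff (fb_star B l) l)
      \<le> fb_norm B (Be.diff (fb_star B l) (fb_star B (s n))) + fb_norm B (Be.diff (s n) l)"
    using Be.nrm_diff_triangle[of "fb_star B l" "s n" l] assms by simp
  also have "Be.diff (fb_star B l) (fb_star B (s n)) = fb_star B (Be.diff l (s n))"
    using fb_star_diff[of l "s n"] assms by simp
  also have "fb_norm B \<dots> = fb_norm B (Be.diff (s n) l)"
    using Be.nrm_diff_commute[of "s n" l] assms by simp
  finally show "fb_norm B (Be.diff (fb_star B l) l) \<le> 2 * fb_norm B (Be.diff (s n) l)"
    by simp
qed (use assms tendsto_mult_right_zero[OF lim, of 2] in simp_all)

lemma limit_commute: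
  assumes "h \<in> Be" "\<And>n. s n \<in> Be" "\<And>n. fb_mul B h (s n) = fb_mul B (s n) h" "l \<in> Be"
    and lim: "(\<lambda>n. fb_norm B (Be.diff (s n) l)) \<longlonglongrightarrow> 0"
  shows "fb_mul B h l = fb_mul B l h"
proof (rule Be.eq_if_nrm_diff_le_tendsto_zero)
  fix n
  have "fb_norm B (Be.diff (fb_mul B h l) (fb_mul B l h))
      \<le> fb_norm B (Be.diff (fb_mul B h l) (fb_mul B h (s n)))
        + fb_norm B (Be.diff (fb_mul B (s n) h) (fb_mul B l h))"
    using Be.nrm_diff_triangle[of "fb_mul B h l" "fb_mul B h (s n)" "fb_mul B l h"] assms by simp
  also have "\<dots> = fb_norm B (fb_mul B h (Be.diff l (s n))) + fb_norm B (fb_mul B (Be.diff (s n) l) h)"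
    using assms by (simp add: fb_mul_diff_left fb_mul_diff_right)
  also have "\<dots> \<le> fb_norm B h * fb_norm B (Be.diff l (s n)) + fb_norm B (Be.diff (s n) l) * fb_norm B h"
    by (intro add_mono fb_norm_mul_le)
  also have "\<dots> = 2 * fb_norm B h * fb_norm B (Be.diff (s n) l)"
    using assms by (simp add: Be.nrm_diff_commute algebra_simps)
  finally show "fb_norm B (Be.diff (fb_mul B h l) (fb_mul B l h))
      \<le> 2 * fb_norm B h * fb_norm B (Be.diff (s n) l)" .
qed (use assms tendsto_mult_right_zero[OF lim] in simp_all)

lemma circle_iter_limit_fixed_point:
  assumes "a \<in> Be" "fb_norm B a \<le> 1/4" "l \<in> Be"
    and lim: "(\<lambda>n. fb_norm B (Be.diff (circle_iter a n) l)) \<longlonglongrightarrow> 0"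
  shows "l = circle_step a l"
proof (rule Be.eq_if_nrm_diff_le_tendsto_zero)
  let ?d = "\<lambda>n. fb_norm B (Be.diff (circle_iter a n) l)"
  fix n
  have "fb_norm B (Be.diff l (circle_step a l))
      \<le> fb_norm B (Be.diff l (circle_iter a (Suc n)))
        + fb_norm B (Be.diff (circle_step a (circle_iter a n)) (circle_step a l))"
    using Be.nrm_diff_triangle[of l "circle_iter a (Suc n)" "circle_step a l"] assms
    by (simp add: circle_iter_Suc)
  also have "\<dots> \<le> ?d (Suc n) + (fb_norm B (circle_iter a n) + fb_norm B l) / 2 * ?d n"
    using circle_step_lipschitz[of a "circle_iter a n" l] assms by (simp add: Be.nrm_diff_commute)
  also have "\<dots> \<le> ?d (Suc n) + (1/4 + fb_norm B l) / 2 * ?d n"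
    using circle_iter_norm_le[OF assms(1,2), of n] by (intro add_mono mult_right_mono) simp_all
  finally show "fb_norm B (Be.diff l (circle_step a l)) \<le> ?d (Suc n) + (1/4 + fb_norm B l) / 2 * ?d n" .
next
  let ?d = "\<lambda>n. fb_norm B (Be.diff (circle_iter a n) l)"
  have "(\<lambda>n. ?d (Suc n) + (1/4 + fb_norm B l) / 2 * ?d n) \<longlonglongrightarrow> 0 + (1/4 + fb_norm B l) / 2 * 0"
    by (intro tendsto_intros LIMSEQ_Suc lim)
  then show "(\<lambda>n. ?d (Suc n) + (1/4 + fb_norm B l) / 2 * ?d n) \<longlonglongrightarrow> 0"
    by simp
qed (use assms in simp_all)

lemma circle_partner_exists:
  assumes "h \<in> Be" "fb_star B h = h" "fb_norm B h \<le> 1/2"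
  shows "\<exists>l\<in>Be. fb_star B l = l \<and> fb_mul B h l = fb_mul B l h \<and>
    fb_add B (fb_add B (fb_mul B h h) (fb_mul B l l)) (fb_add B l l) = fb_zero B e"
proof -
  define a where "a = fb_mul B h h"
  have a: "a \<in> Be" "fb_star B a = a" "fb_norm B a \<le> 1/4"
    using assms fb_norm_mul_le[of h h] mult_mono[OF assms(3,3)]
    unfolding a_def by (simp_all add: fb_star_mul)
  obtain l where l: "l \<in> Be" and lim: "(\<lambda>n. fb_norm B (Be.diff (circle_iter a n) l)) \<longlonglongrightarrow> 0"
    using Be.geometric_converges[of "circle_iter a"] circle_iter_step_le a by auto
  have "fb_star B l = l"
    using limit_selfadjoint[OF _ circle_iter_selfadjoint l lim] a by simp
  moreover have "fb_mul B h l = fb_mul B l h"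
    using limit_commute[OF assms(1) _ circle_iter_commute l] lim assms unfolding a_def by simp
  moreover have "fb_add B (fb_add B a (fb_mul B l l)) (fb_add B l l) = fb_zero B e"
  proof -
    let ?w = "fb_add B a (fb_mul B l l)"
    have "l = fb_smul B (-1/2) ?w"
      using circle_iter_limit_fixed_point[OF a(1,3) l lim] unfolding circle_step_def .
    then have "fb_add B l l = fb_smul B (-1) ?w"
      using Be.smul_add_left[of ?w "-1/2" "-1/2"] a l by simp
    then show ?thesis using a l by simp
  qed
  ultimately show ?thesis using l unfolding a_def by blast
qed

end

primrec hb_sum :: "('g, 'b, 'x, 'w) hilb_ops_scheme \<Rightarrow> 'g \<Rightarrow> (nat \<Rightarrow> 'x) \<Rightarrow> nat \<Rightarrow> 'x" where
  "hb_sum X g f 0 = hb_zero X g"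
| "hb_sum X g f (Suc n) = hb_add X (hb_sum X g f n) (f n)"

lemma fb_sum_cong: "(\<And>i. i < n \<Longrightarrow> f i = f' i) \<Longrightarrow> fb_sum B g f n = fb_sum B g f' n"
  by (induction n) simp_all

locale fell_action = fell G B
  for G :: "('g, 'm) monoid_scheme" and B :: "('g, 'b, 'z) fell_ops_scheme" +
  fixes X :: "('g, 'b, 'x, 'w) hilb_ops_scheme" and \<rho> :: "'b \<Rightarrow> 'x \<Rightarrow> 'x"
  assumes hilbert_bundle: "hilbert_bundle G B X"
    and action: "bundle_action G B X \<rho>"
begin

lemma hb_deg_closed [simp]: "hb_deg X y \<in> carrier G"
  using hilbert_bundle unfolding hilbert_bundle_def by meson

lemma hb_deg_zero [simp]: "g \<in> carrier G \<Longrightarrow> hb_deg X (hb_zero X g) = g"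
  using hilbert_bundle unfolding hilbert_bundle_def by meson

lemma hfibre_space:
  "g \<in> carrier G \<Longrightarrow> fibre_space (hfibre X g) (hb_add X) (hb_smul X) (hb_zero X g) (hb_norm X)"
  using hilbert_bundle unfolding hilbert_bundle_def fibre_space_def by meson

lemma hb_deg_ract [simp]: "hb_deg X (hb_ract X y b) = hb_deg X y \<otimes>\<^bsub>G\<^esub> fb_deg B b"
  using hilbert_bundle unfolding hilbert_bundle_def by meson

lemma hb_ip_deg [simp]: "fb_deg B (hb_ip X y z) = inv\<^bsub>G\<^esub> (hb_deg X y) \<otimes>\<^bsub>G\<^esub> hb_deg X z"
  using hilbert_bundle unfolding hilbert_bundle_def by meson

lemma hb_ip_add_right:
  "hb_deg X z = hb_deg X z' \<Longrightarrow> hb_ip X y (hb_add X z z') = fb_add B (hb_ip X y z) (hb_ip X y z')"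
  using hilbert_bundle unfolding hilbert_bundle_def by meson

lemma hb_ip_smul_right [simp]: "hb_ip X y (hb_smul X k z) = fb_smul B k (hb_ip X y z)"
  using hilbert_bundle unfolding hilbert_bundle_def by meson

lemma hb_ip_ract_right: "hb_ip X y (hb_ract X z b) = fb_mul B (hb_ip X y z) b"
  using hilbert_bundle unfolding hilbert_bundle_def by meson

lemma hb_ip_star [simp]: "fb_star B (hb_ip X y z) = hb_ip X z y"
  using hilbert_bundle unfolding hilbert_bundle_def by meson

lemma hb_ip_pos: "fb_pos G B (hb_ip X y y)"
  using hilbert_bundle unfolding hilbert_bundle_def by meson

lemma hb_norm_eq: "hb_norm X y = sqrt (fb_norm B (hb_ip X y y))"
  using hilbert_bundle unfolding hilbert_bundle_def by meson

lemma rho_deg [simp]: "hb_deg X (\<rho> b y) = fb_deg B b \<otimes>\<^bsub>G\<^esub> hb_deg X y"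
  using action unfolding bundle_action_def by meson

lemma rho_add_left: "fb_deg B b = fb_deg B b' \<Longrightarrow> \<rho> (fb_add B b b') y = hb_add X (\<rho> b y) (\<rho> b' y)"
  using action unfolding bundle_action_def by meson

lemma rho_add_right: "hb_deg X y = hb_deg X y' \<Longrightarrow> \<rho> b (hb_add X y y') = hb_add X (\<rho> b y) (\<rho> b y')"
  using action unfolding bundle_action_def by meson

lemma rho_smul [simp]: "\<rho> (fb_smul B k b) y = hb_smul X k (\<rho> b y)"
  using action unfolding bundle_action_def by meson

lemma rho_mul: "\<rho> (fb_mul B b c) y = \<rho> b (\<rho> c y)"
  using action unfolding bundle_action_def by (metis comp_apply)

lemma rho_adjoint: "hb_ip X (\<rho> b y) z = hb_ip X y (\<rho> (fb_star B b) z)"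
  using action unfolding bundle_action_def by meson

lemma mem_hfibre_iff: "y \<in> hfibre X g \<longleftrightarrow> hb_deg X y = g"
  unfolding hfibre_def by simp

lemma mem_hfibre_deg: "y \<in> hfibre X (hb_deg X y)"
  by (simp add: mem_hfibre_iff)

lemma hb_deg_smul [simp]: "hb_deg X (hb_smul X k y) = hb_deg X y"
  using fibre_space.smul_closed[OF hfibre_space mem_hfibre_deg] by (simp add: mem_hfibre_iff)

lemma hb_deg_add [simp]: "hb_deg X y = hb_deg X z \<Longrightarrow> hb_deg X (hb_add X y z) = hb_deg X y"
  using fibre_space.add_closed[OF hfibre_space mem_hfibre_deg, of y z] by (simp add: mem_hfibre_iff)

lemma hb_norm_nonneg [simp]: "hb_norm X y \<ge> 0"
  by (simp add: hb_norm_eq)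

lemma hb_norm_sq: "(hb_norm X y)\<^sup>2 = fb_norm B (hb_ip X y y)"
  by (simp add: hb_norm_eq)

lemma hb_norm_smul [simp]: "hb_norm X (hb_smul X k y) = cmod k * hb_norm X y"
  using fibre_space.nrm_smul[OF hfibre_space mem_hfibre_deg] by simp

lemma hb_norm_triangle:
  "hb_deg X y = hb_deg X z \<Longrightarrow> hb_norm X (hb_add X y z) \<le> hb_norm X y + hb_norm X z"
  using fibre_space.nrm_triangle[OF hfibre_space mem_hfibre_deg, of y z] by (simp add: mem_hfibre_iff)

lemma hb_ip_closed_unit [simp]: "hb_deg X y = hb_deg X z \<Longrightarrow> hb_ip X y z \<in> Be"
  by (simp add: mem_fibre_iff)

lemma hb_ip_add_left:
  "hb_deg X y = hb_deg X y' \<Longrightarrow> hb_ip X (hb_add X y y') z = fb_add B (hb_ip X y z) (hb_ip X y' z)"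
  by (metis hb_ip_add_right hb_ip_deg hb_ip_star fb_star_add)

lemma hb_ip_smul_left [simp]: "hb_ip X (hb_smul X k y) z = fb_smul B (cnj k) (hb_ip X y z)"
  by (metis complex_cnj_cnj hb_ip_smul_right hb_ip_star fb_star_smul)

lemma hb_ip_ract_left: "hb_ip X (hb_ract X y c) z = fb_mul B (fb_star B c) (hb_ip X y z)"
  by (metis hb_ip_star hb_ip_ract_right fb_star_mul)

lemma hb_ip_zero_right:
  assumes "g \<in> carrier G"
  shows "hb_ip X y (hb_zero X g) = fb_zero B (inv\<^bsub>G\<^esub> (hb_deg X y) \<otimes>\<^bsub>G\<^esub> g)"
proof -
  have "hb_zero X g = hb_smul X 0 (hb_zero X g)"
    using fibre_space.smul_zero_left[OF hfibre_space fibre_space.zero_closed] assms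
    by (metis hfibre_space)
  then have "hb_ip X y (hb_zero X g) = fb_smul B 0 (hb_ip X y (hb_zero X g))"
    by (metis hb_ip_smul_right)
  also have "\<dots> = fb_zero B (inv\<^bsub>G\<^esub> (hb_deg X y) \<otimes>\<^bsub>G\<^esub> g)"
    using fibre_space.smul_zero_left[OF fibre_space mem_fibre_deg] assms by simp
  finally show ?thesis .
qed

lemma rho_zero:
  assumes "g \<in> carrier G"
  shows "\<rho> (fb_zero B g) y = hb_zero X (g \<otimes>\<^bsub>G\<^esub> hb_deg X y)"
proof -
  have "fb_zero B g = fb_smul B 0 (fb_zero B g)"
    using fibre_space.smul_zero_left[OF fibre_space fibre_space.zero_closed] assms
    by (metis fibre_space)
  then have "\<rho> (fb_zero B g) y = hb_smul X 0 (\<rho> (fb_zero B g) y)"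
    by (metis rho_smul)
  also have "\<dots> = hb_zero X (g \<otimes>\<^bsub>G\<^esub> hb_deg X y)"
    using fibre_space.smul_zero_left[OF hfibre_space mem_hfibre_deg] assms by simp
  finally show ?thesis .
qed

lemma hb_ip_expand:
  assumes "hb_deg X y = hb_deg X z"
  shows "hb_ip X (hb_add X y (hb_smul X \<alpha> z)) (hb_add X y (hb_smul X \<alpha> z)) =
    fb_add B (fb_add B (hb_ip X y y) (fb_smul B \<alpha> (hb_ip X y z)))
      (fb_add B (fb_smul B (cnj \<alpha>) (hb_ip X z y)) (fb_smul B (cnj \<alpha> * \<alpha>) (hb_ip X z z)))"
proof -
  let ?w = "hb_add X y (hb_smul X \<alpha> z)"
  have "hb_ip X ?w ?w = fb_add B (hb_ip X y ?w) (hb_ip X (hb_smul X \<alpha> z) ?w)"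
    using assms by (simp add: hb_ip_add_left)
  also have "hb_ip X y ?w = fb_add B (hb_ip X y y) (fb_smul B \<alpha> (hb_ip X y z))"
    using assms by (simp add: hb_ip_add_right)
  also have "hb_ip X (hb_smul X \<alpha> z) ?w
      = fb_add B (fb_smul B (cnj \<alpha>) (hb_ip X z y)) (fb_smul B (cnj \<alpha> * \<alpha>) (hb_ip X z z))"
    using assms by (simp add: hb_ip_add_right Be.smul_add_right)
  finally show ?thesis .
qed

text \<open>Without an order on \<open>B\<^sub>e\<close> one cannot conclude \<open>\<parallel>\<langle>p,p\<rangle>\<parallel> \<le> \<parallel>\<langle>p,p\<rangle> + \<langle>q,q\<rangle>\<parallel>\<close>
  directly; instead \<open>p + iq\<close> and \<open>p - iq\<close> both have norm \<open>\<parallel>y\<parallel>\<close> and average to \<open>p\<close>.\<close>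

lemma hb_norm_le_if_pythagorean:
  assumes deg: "hb_deg X p = hb_deg X q"
    and sym: "hb_ip X p q = hb_ip X q p"
    and sum: "fb_add B (hb_ip X p p) (hb_ip X q q) = hb_ip X y y"
  shows "hb_norm X p \<le> hb_norm X y"
proof -
  have rotate: "hb_norm X (hb_add X p (hb_smul X \<alpha> q)) = hb_norm X y"
    if "cnj \<alpha> * \<alpha> = 1" "\<alpha> + cnj \<alpha> = 0" for \<alpha>
  proof -
    have "hb_ip X (hb_add X p (hb_smul X \<alpha> q)) (hb_add X p (hb_smul X \<alpha> q))
        = fb_add B (fb_add B (hb_ip X p p) (fb_smul B \<alpha> (hb_ip X p q)))
            (fb_add B (fb_smul B (cnj \<alpha>) (hb_ip X p q)) (hb_ip X q q))"
      using hb_ip_expand[OF deg, of \<alpha>] deg sym that by simp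
    also have "\<dots> = hb_ip X y y"
      unfolding sum[symmetric] using deg that by (intro Be.add_smul_cancel) simp_all
    finally show ?thesis by (simp add: hb_norm_eq)
  qed
  define d where "d = hb_deg X p"
  interpret Xd: fibre_space "hfibre X d" "hb_add X" "hb_smul X" "hb_zero X d" "hb_norm X"
    by (simp add: hfibre_space d_def)
  have pq: "p \<in> hfibre X d" "q \<in> hfibre X d"
    using deg by (simp_all add: mem_hfibre_iff d_def)
  have "hb_add X (hb_add X p (hb_smul X \<i> q)) (hb_add X p (hb_smul X (-\<i>) q))
      = hb_add X (hb_add X p p) (hb_add X (hb_smul X \<i> q) (hb_smul X (-\<i>) q))"
    using pq by (intro Xd.add_add_swap) simp_all
  also have "hb_add X (hb_smul X \<i> q) (hb_smul X (-\<i>) q) = hb_zero X d"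
    using Xd.smul_add_left[of q \<i> "-\<i>"] pq by simp
  also have "hb_add X (hb_add X p p) (hb_zero X d) = hb_smul X 2 p"
    using Xd.add_self pq by simp
  finally have "hb_smul X 2 p = hb_add X (hb_add X p (hb_smul X \<i> q)) (hb_add X p (hb_smul X (-\<i>) q))" ..
  then have "2 * hb_norm X p
      \<le> hb_norm X (hb_add X p (hb_smul X \<i> q)) + hb_norm X (hb_add X p (hb_smul X (-\<i>) q))"
    using Xd.nrm_triangle pq by (metis Xd.add_closed Xd.smul_closed hb_norm_smul norm_numeral)
  also have "\<dots> = 2 * hb_norm X y"
    using rotate[of \<i>] rotate[of "-\<i>"] by simp
  finally show ?thesis by simp
qed

lemma rho_circle_symmetric:
  assumes "h \<in> Be" "fb_star B h = h" "l \<in> Be" "fb_star B l = l" "fb_mul B h l = fb_mul B l h"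
  shows "hb_ip X (\<rho> h y) (hb_add X y (\<rho> l y)) = hb_ip X (hb_add X y (\<rho> l y)) (\<rho> h y)"
proof -
  have deg: "fb_deg B h = e" "fb_deg B l = e"
    using assms by (simp_all add: mem_fibre_iff)
  have "hb_ip X (\<rho> h y) (hb_add X y (\<rho> l y))
      = fb_add B (hb_ip X y (\<rho> h y)) (hb_ip X y (\<rho> (fb_mul B h l) y))"
    using deg assms(2) by (simp add: hb_ip_add_right rho_add_right rho_adjoint rho_mul)
  also have "\<dots> = hb_ip X (hb_add X y (\<rho> l y)) (\<rho> h y)"
    using deg assms(4,5) by (simp add: hb_ip_add_left rho_adjoint rho_mul)
  finally show ?thesis .
qed

lemma rho_circle_pythagorean:
  assumes "h \<in> Be" "fb_star B h = h" "l \<in> Be" "fb_star B l = l"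
    and circle: "fb_add B (fb_add B (fb_mul B h h) (fb_mul B l l)) (fb_add B l l) = fb_zero B e"
  shows "fb_add B (hb_ip X (\<rho> h y) (\<rho> h y)) (hb_ip X (hb_add X y (\<rho> l y)) (hb_add X y (\<rho> l y)))
    = hb_ip X y y"
proof -
  have deg: "fb_deg B h = e" "fb_deg B l = e"
    using assms by (simp_all add: mem_fibre_iff)
  define Y where "Y = hb_ip X y y"
  define L where "L = hb_ip X y (\<rho> l y)"
  define H2 where "H2 = hb_ip X y (\<rho> (fb_mul B h h) y)"
  define L2 where "L2 = hb_ip X y (\<rho> (fb_mul B l l) y)"
  have closed: "Y \<in> Be" "L \<in> Be" "H2 \<in> Be" "L2 \<in> Be"
    unfolding Y_def L_def H2_def L2_def using deg by (simp_all add: mem_fibre_iff)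
  have hh: "hb_ip X (\<rho> h y) (\<rho> h y) = H2"
    unfolding H2_def using assms(2) by (simp add: rho_adjoint rho_mul)
  have qq: "hb_ip X (hb_add X y (\<rho> l y)) (hb_add X y (\<rho> l y)) = fb_add B (fb_add B Y L) (fb_add B L L2)"
    unfolding Y_def L_def L2_def using deg assms(4)
    by (simp add: hb_ip_add_left hb_ip_add_right rho_add_right rho_adjoint rho_mul)
  have "fb_add B (fb_add B H2 L2) (fb_add B L L) = hb_ip X y (\<rho> (fb_zero B e) y)"
    unfolding circle[symmetric] H2_def L2_def L_def using deg by (simp add: rho_add_left hb_ip_add_right)
  also have "\<dots> = fb_zero B e"
    by (simp add: rho_zero hb_ip_zero_right)
  finally have zero: "fb_add B (fb_add B H2 L2) (fb_add B L L) = fb_zero B e" .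
  have "fb_add B H2 (fb_add B (fb_add B Y L) (fb_add B L L2))
      = fb_add B Y (fb_add B (fb_add B H2 L2) (fb_add B L L))"
    using closed by (simp only: Be.add_assoc Be.add_commute Be.add_left_commute Be.add_closed)
  then show ?thesis using hh qq zero closed Y_def by simp
qed

lemma hb_norm_rho_selfadjoint_le:
  assumes "h \<in> Be" "fb_star B h = h" "fb_norm B h \<le> 1/2"
  shows "hb_norm X (\<rho> h y) \<le> hb_norm X y"
proof -
  obtain l where "l \<in> Be" "fb_star B l = l" "fb_mul B h l = fb_mul B l h"
    and "fb_add B (fb_add B (fb_mul B h h) (fb_mul B l l)) (fb_add B l l) = fb_zero B e"
    using circle_partner_exists[OF assms] by blast
  then show ?thesis
    using assms
    by (intro hb_norm_le_if_pythagorean[where q = "hb_add X y (\<rho> l y)"]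
        rho_circle_symmetric rho_circle_pythagorean) (simp_all add: mem_fibre_iff)
qed

lemma hb_norm_rho_selfadjoint_le_double:
  assumes "k \<in> Be" "fb_star B k = k" "fb_norm B k \<le> 1"
  shows "hb_norm X (\<rho> k y) \<le> 2 * hb_norm X y"
proof -
  define h where "h = fb_smul B (1/2) k"
  have "hb_norm X (\<rho> h y) \<le> hb_norm X y"
    unfolding h_def using assms by (intro hb_norm_rho_selfadjoint_le) simp_all
  moreover have "k = fb_smul B 2 h"
    unfolding h_def using assms by simp
  ultimately show ?thesis by simp
qed

lemma hb_ip_symmetric_norm_le:
  assumes "hb_deg X u = hb_deg X v" "hb_ip X u v = hb_ip X v u"
  shows "fb_norm B (hb_ip X u v) \<le> (hb_norm X u + hb_norm X v)\<^sup>2 / 2"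
proof -
  define c where "c = hb_ip X u v"
  define w_plus where "w_plus = hb_add X u (hb_smul X 1 v)"
  define w_minus where "w_minus = hb_add X u (hb_smul X (-1) v)"
  have closed: "c \<in> Be" "hb_ip X u u \<in> Be" "hb_ip X v v \<in> Be"
    unfolding c_def using assms by simp_all
  have "Be.diff (hb_ip X w_plus w_plus) (hb_ip X w_minus w_minus) = fb_smul B 4 c"
    unfolding w_plus_def w_minus_def hb_ip_expand[OF assms(1)] using assms closed unfolding c_def
    by (simp add: Be.diff_polarization)
  then have "4 * fb_norm B c = fb_norm B (Be.diff (hb_ip X w_plus w_plus) (hb_ip X w_minus w_minus))"
    using closed by simp
  also have "\<dots> \<le> fb_norm B (hb_ip X w_plus w_plus) + fb_norm B (hb_ip X w_minus w_minus)"
    unfolding Be.diff_def using assms unfolding w_plus_def w_minus_def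
    by (intro order.trans[OF Be.nrm_triangle]) simp_all
  also have "\<dots> = (hb_norm X w_plus)\<^sup>2 + (hb_norm X w_minus)\<^sup>2"
    by (simp add: hb_norm_sq)
  also have "\<dots> \<le> (hb_norm X u + hb_norm X v)\<^sup>2 + (hb_norm X u + hb_norm X v)\<^sup>2"
    unfolding w_plus_def w_minus_def using assms
    by (intro add_mono power_mono order.trans[OF hb_norm_triangle]) simp_all
  finally show ?thesis unfolding c_def by simp
qed

lemma hb_ip_symmetric_norm_le_scaled:
  assumes "hb_deg X u = hb_deg X v" "hb_ip X u v = hb_ip X v u" "t > 0"
  shows "fb_norm B (hb_ip X u v) \<le> (t * hb_norm X u + hb_norm X v / t)\<^sup>2 / 2"
proof -
  define u' where "u' = hb_smul X (complex_of_real t) u"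
  define v' where "v' = hb_smul X (complex_of_real (1/t)) v"
  have closed: "hb_ip X u v \<in> Be" "hb_ip X v u \<in> Be"
    using assms by simp_all
  have "complex_of_real (1/t) * cnj (complex_of_real t) = 1"
    "complex_of_real t * cnj (complex_of_real (1/t)) = 1"
    using assms(3) by (simp_all del: of_real_divide flip: of_real_mult)
  then have ip: "hb_ip X u' v' = hb_ip X u v" "hb_ip X v' u' = hb_ip X v u"
    unfolding u'_def v'_def using closed by (simp_all only: hb_ip_smul_left hb_ip_smul_right Be.smul_smul Be.smul_one)
  have "fb_norm B (hb_ip X u' v') \<le> (hb_norm X u' + hb_norm X v')\<^sup>2 / 2"
    using assms ip unfolding u'_def v'_def by (intro hb_ip_symmetric_norm_le) simp_all
  moreover have "hb_norm X u' = t * hb_norm X u" "hb_norm X v' = hb_norm X v / t"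
    unfolding u'_def v'_def using assms(3) by (simp_all add: norm_divide)
  ultimately show ?thesis using ip by simp
qed

lemma hb_norm_ract_le: "hb_norm X (hb_ract X y c) \<le> hb_norm X y * fb_norm B c"
proof -
  have "(hb_norm X (hb_ract X y c))\<^sup>2 = fb_norm B (fb_mul B (fb_star B c) (fb_mul B (hb_ip X y y) c))"
    by (simp add: hb_norm_sq hb_ip_ract_left hb_ip_ract_right fb_mul_assoc)
  also have "\<dots> \<le> fb_norm B (fb_star B c) * fb_norm B (fb_mul B (hb_ip X y y) c)"
    by (rule fb_norm_mul_le)
  also have "\<dots> \<le> fb_norm B c * (fb_norm B (hb_ip X y y) * fb_norm B c)"
    by (simp add: mult_left_mono fb_norm_mul_le)
  also have "\<dots> = (hb_norm X y * fb_norm B c)\<^sup>2"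
    by (simp add: hb_norm_sq[symmetric] power2_eq_square)
  finally show ?thesis
    by (rule power2_le_imp_le) simp
qed

lemma hb_norm_rho_le:
  assumes "fb_norm B b = 1"
  shows "hb_norm X (\<rho> b y) \<le> 3 * hb_norm X y"
proof -
  define k where "k = fb_mul B (fb_star B b) b"
  have k: "k \<in> Be" "fb_star B k = k" "fb_norm B k = 1"
    unfolding k_def using assms by (simp_all add: mem_fibre_iff fb_star_mul fb_norm_star_mul_self)
  have "hb_ip X (\<rho> k y) y = hb_ip X y (\<rho> k y)"
    using k(2) by (simp add: rho_adjoint)
  moreover have "hb_deg X y = hb_deg X (\<rho> k y)"
    using k(1) by (simp add: mem_fibre_iff)
  ultimately have "fb_norm B (hb_ip X y (\<rho> k y)) \<le> (hb_norm X y + hb_norm X (\<rho> k y))\<^sup>2 / 2"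
    by (intro hb_ip_symmetric_norm_le) simp_all
  also have "\<dots> \<le> (3 * hb_norm X y)\<^sup>2"
  proof -
    have "(hb_norm X y + hb_norm X (\<rho> k y))\<^sup>2 \<le> (3 * hb_norm X y)\<^sup>2"
      using hb_norm_rho_selfadjoint_le_double[OF k(1,2), of y] k(3) by (intro power_mono) simp_all
    then show ?thesis using zero_le_power2[of "3 * hb_norm X y"] by linarith
  qed
  finally have "(hb_norm X (\<rho> b y))\<^sup>2 \<le> (3 * hb_norm X y)\<^sup>2"
    unfolding k_def by (simp add: hb_norm_sq rho_adjoint rho_mul)
  then show ?thesis
    by (rule power2_le_imp_le) simp
qed

text \<open>For \<open>c = \<langle>x, \<rho>(b) x\<rangle>\<close> the element \<open>c\<^sup>* c = \<langle>\<rho>(b) x, x c\<rangle>\<close> is self-adjoint, so the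
  polarisation bound applies to \<open>\<parallel>c\<parallel>\<^sup>2 = \<parallel>c\<^sup>* c\<parallel>\<close>; the scale \<open>t\<close> makes the
  \<open>\<parallel>x c\<parallel>\<close>-term at most \<open>\<parallel>c\<parallel>/2\<close>.\<close>

lemma hb_ip_rho_norm_le_unit:
  assumes "hb_deg X x = e" "fb_norm B b = 1"
  shows "fb_norm B (hb_ip X x (\<rho> b x)) \<le> 6 * hb_norm X x * (2 * hb_norm X x + 1)"
proof -
  define c where "c = hb_ip X x (\<rho> b x)"
  define t where "t = 2 * hb_norm X x + 1"
  have t: "t > 0" "hb_norm X x / t \<le> 1/2"
    unfolding t_def by (simp_all add: field_simps add_pos_nonneg)
  have cc: "fb_mul B (fb_star B c) c = hb_ip X (\<rho> b x) (hb_ract X x c)"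
    unfolding c_def by (simp add: hb_ip_ract_right)
  have sym: "hb_ip X (\<rho> b x) (hb_ract X x c) = hb_ip X (hb_ract X x c) (\<rho> b x)"
    by (metis cc hb_ip_star fb_star_mul fb_star_star)
  have deg: "hb_deg X (\<rho> b x) = hb_deg X (hb_ract X x c)"
    unfolding c_def using assms(1) by simp
  have "(fb_norm B c)\<^sup>2 = fb_norm B (hb_ip X (\<rho> b x) (hb_ract X x c))"
    by (simp only: cc flip: fb_norm_star_mul_self)
  also have "\<dots> \<le> (t * hb_norm X (\<rho> b x) + hb_norm X (hb_ract X x c) / t)\<^sup>2 / 2"
    by (rule hb_ip_symmetric_norm_le_scaled[OF deg sym t(1)])
  also have "\<dots> \<le> (t * hb_norm X (\<rho> b x) + hb_norm X (hb_ract X x c) / t)\<^sup>2"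
    by simp
  finally have "fb_norm B c \<le> t * hb_norm X (\<rho> b x) + hb_norm X (hb_ract X x c) / t"
    by (rule power2_le_imp_le) (use t(1) in simp)
  also have "hb_norm X (hb_ract X x c) / t \<le> fb_norm B c * (hb_norm X x / t)"
    using hb_norm_ract_le[of x c] t(1) by (simp add: divide_right_mono mult.commute)
  also have "\<dots> \<le> fb_norm B c / 2"
    using mult_left_mono[OF t(2), of "fb_norm B c"] by simp
  finally have "fb_norm B c \<le> 2 * t * hb_norm X (\<rho> b x)" by simp
  also have "\<dots> \<le> 2 * t * (3 * hb_norm X x)"
    using hb_norm_rho_le[OF assms(2), of x] t(1) by simp
  finally show ?thesis unfolding c_def t_def by (simp add: algebra_simps)
qed

lemma hb_ip_rho_norm_le:
  assumes "hb_deg X x = e"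
  shows "fb_norm B (hb_ip X x (\<rho> b x)) \<le> 6 * hb_norm X x * (2 * hb_norm X x + 1) * fb_norm B b"
proof (cases "fb_norm B b = 0")
  case True
  then have "b = fb_zero B (fb_deg B b)"
    using fibre_space.nrm_eq_zero_iff[OF fibre_space mem_fibre_deg] by simp
  then have "hb_ip X x (\<rho> b x) = fb_zero B (fb_deg B b)"
    using assms by (metis fb_deg_closed rho_zero hb_ip_zero_right rho_deg G.r_one G.l_one G.inv_one)
  then show ?thesis using True by simp
next
  case False
  define r where "r = fb_norm B b"
  have r: "r > 0" using False unfolding r_def by (simp add: less_le)
  define b' where "b' = fb_smul B (complex_of_real (1/r)) b"
  have "b = fb_smul B (complex_of_real r) b'"
    unfolding b'_def using r by (simp flip: of_real_mult)
  then have "fb_norm B (hb_ip X x (\<rho> b x)) = r * fb_norm B (hb_ip X x (\<rho> b' x))"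
    using r by (metis fb_norm_smul hb_ip_smul_right norm_of_real rho_smul abs_of_pos)
  also have "\<dots> \<le> r * (6 * hb_norm X x * (2 * hb_norm X x + 1))"
    using hb_ip_rho_norm_le_unit[OF assms, of b'] r
    unfolding b'_def r_def by (intro mult_left_mono) (simp_all add: norm_divide)
  finally show ?thesis unfolding r_def by (simp add: algebra_simps)
qed

lemma hb_sum_deg: "(\<And>i. i < n \<Longrightarrow> hb_deg X (f i) = e) \<Longrightarrow> hb_deg X (hb_sum X e f n) = e"
  by (induction n) simp_all

lemma hb_ip_sum_left:
  assumes "\<And>i. i < n \<Longrightarrow> hb_deg X (f i) = e" "hb_deg X z = e"
  shows "hb_ip X (hb_sum X e f n) z = fb_sum B e (\<lambda>i. hb_ip X (f i) z) n"
  using assms(1)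
proof (induction n)
  case 0
  have "hb_ip X (hb_zero X e) z = fb_star B (fb_zero B e)"
    using assms(2) by (metis G.one_closed G.inv_one G.l_one hb_ip_star hb_ip_zero_right)
  also have "\<dots> = fb_zero B e"
    using fb_star_smul[of 0 "fb_zero B e"] by simp
  finally show ?case by simp
next
  case (Suc n)
  then show ?case using hb_sum_deg[of n f] by (simp add: hb_ip_add_left)
qed

lemma hb_ip_sum_right:
  assumes "\<And>i. i < n \<Longrightarrow> hb_deg X (f i) = e" "hb_deg X z = e"
  shows "hb_ip X z (hb_sum X e f n) = fb_sum B e (\<lambda>i. hb_ip X z (f i)) n"
  using assms(1)
proof (induction n)
  case 0
  then show ?case using assms(2) by (simp add: hb_ip_zero_right)
next
  case (Suc n)
  then show ?case using hb_sum_deg[of n f] by (simp add: hb_ip_add_right)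
qed

lemma bundle_map_hb_ip_rho:
  assumes "hb_deg X x = e"
  shows "bundle_map G B (\<lambda>b. hb_ip X x (\<rho> b x))"
  unfolding bundle_map_def
proof (intro ballI conjI allI)
  fix g assume g: "g \<in> carrier G"
  show "hb_ip X x (\<rho> b x) \<in> fibre B g" if "b \<in> fibre B g" for b
    using that g assms by (simp add: mem_fibre_iff)
  show "hb_ip X x (\<rho> (fb_add B a b) x) = fb_add B (hb_ip X x (\<rho> a x)) (hb_ip X x (\<rho> b x))"
    if "a \<in> fibre B g" "b \<in> fibre B g" for a b
    using that by (simp add: mem_fibre_iff rho_add_left hb_ip_add_right)
  show "hb_ip X x (\<rho> (fb_smul B k a) x) = fb_smul B k (hb_ip X x (\<rho> a x))" for k a
    by simp
  show "\<exists>K. \<forall>b\<in>fibre B g. fb_norm B (hb_ip X x (\<rho> b x)) \<le> K * fb_norm B b"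
    using hb_ip_rho_norm_le[OF assms] by blast
qed

lemma positive_definite_hb_ip_rho:
  assumes "hb_deg X x = e"
  shows "positive_definite G B (\<lambda>b. hb_ip X x (\<rho> b x))"
  unfolding positive_definite_def
proof (intro allI impI)
  fix n and gs :: "nat \<Rightarrow> 'g" and a b :: "nat \<Rightarrow> 'b"
  assume fibres: "\<forall>i<n. gs i \<in> carrier G \<and> a i \<in> fibre B (gs i) \<and> b i \<in> fibre B (gs i)"
  define u where "u j = hb_ract X (\<rho> (a j) x) (fb_star B (b j))" for j
  have deg_u: "hb_deg X (u j) = e" if "j < n" for j
    using fibres that assms unfolding u_def by (simp add: mem_fibre_iff)
  define y where "y = hb_sum X e u n"
  have deg_y: "hb_deg X y = e"
    unfolding y_def using deg_u hb_sum_deg by blast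
  have "hb_ip X y y = fb_sum B e (\<lambda>i. hb_ip X (u i) y) n"
    using hb_ip_sum_left[of n u y, folded y_def] deg_u deg_y by blast
  also have "\<dots> = fb_sum B e (\<lambda>i. fb_sum B e (\<lambda>j. hb_ip X (u i) (u j)) n) n"
    using deg_u unfolding y_def by (intro fb_sum_cong hb_ip_sum_right) auto
  also have "\<dots> = fb_sum B e (\<lambda>i. fb_sum B e (\<lambda>j.
      fb_mul B (fb_mul B (b i) (hb_ip X x (\<rho> (fb_mul B (fb_star B (a i)) (a j)) x))) (fb_star B (b j))) n) n"
    unfolding u_def
    by (intro fb_sum_cong) (simp add: hb_ip_ract_left hb_ip_ract_right rho_adjoint rho_mul fb_mul_assoc)
  finally show "fb_pos G B (fb_sum B e (\<lambda>i. fb_sum B e (\<lambda>j.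
      fb_mul B (fb_mul B (b i) (hb_ip X x (\<rho> (fb_mul B (fb_star B (a i)) (a j)) x))) (fb_star B (b j))) n) n)"
    using hb_ip_pos[of y] by simp
qed

end

theorem proposition4p8:
  fixes G :: "('g, 'm) monoid_scheme"
    and B :: "('g, 'b, 'z) fell_ops_scheme"
    and X :: "('g, 'b, 'x, 'w) hilb_ops_scheme"
    and \<rho> :: "'b \<Rightarrow> 'x \<Rightarrow> 'x"
    and x :: 'x
  assumes "fell_bundle G B"
    and "hilbert_bundle G B X"
    and "bundle_action G B X \<rho>"
    and "hb_deg X x = \<one>\<^bsub>G\<^esub>"
  shows "bundle_map G B (\<lambda>b. hb_ip X x (\<rho> b x))
       \<and> positive_definite G B (\<lambda>b. hb_ip X x (\<rho> b x))"
proof -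
  interpret fell_action G B X \<rho>
    using assms(1-3) by (simp add: fell_action_def fell_action_axioms_def fell_def)
  show ?thesis
    using bundle_map_hb_ip_rho positive_definite_hb_ip_rho assms(4) by blast
qed

end
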